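(* Let $\sigma^2>0$ and $a>1$ be constants, let $Z_1,Z_2,\ldots$ be i.i.d. $\mathcal{N}(0,\sigma^2)$, and let $U_0=0$, $U_i=aU_{i-1}+Z_i$ for $i\ge 1$. For $u_1^n=(u_1,\ldots,u_n)$ let $\hat a_{\mathrm{ML}}(u_1^n)=\frac{\sum_{i=1}^{n-1}u_iu_{i+1}}{\sum_{i=1}^{n-1}u_i^2}$, and define $P^+(n,a,\eta)=-\frac1n\log\mathbb{P}[\hat a_{\mathrm{ML}}(U_1^n)-a>\eta]$ and $P^-(n,a,\eta)=-\frac1n\log\mathbb{P}[\hat a_{\mathrm{ML}}(U_1^n)-a<-\eta]$. For $\eta>0$ and $s>0$ define the sequences $\alpha_1=\beta_1=\frac{\sigma^2s^2-2\eta s}{2}$, $\alpha_\ell=\frac{[a^2+2\sigma^2s(a+\eta)]\alpha_{\ell-1}+\alpha_1}{1-2\sigma^2\alpha_{\ell-1}}$ and $\beta_\ell=\frac{[a^2+2\sigma^2s(-a+\eta)]\beta_{\ell-1}+\beta_1}{1-2\sigma^2\beta_{\ell-1}}$ for $\ell\ge2$, and the sets $\mathcal{S}_n^+=\{s>0:\alpha_\ell<\frac{1}{2\sigma^2}\ \forall \ell\in\{1,\ldots,n\}\}$, $\mathcal{S}_n^-=\{s>0:\beta_\ell<\frac{1}{2\sigma^2}\ \forall \ell\in\{1,\ldots,n\}\}$. Then for every constant $\eta>0$ and every $n\ge2$, $$P^+(n,a,\eta)\ge\sup_{s\in\mathcal{S}_n^+}\frac{1}{2n}\sum_{\ell=1}^{n-1}\log(1-2\sigma^2\alpha_\ell),\qquad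 P^-(n,a,\eta)\ge\sup_{s\in\mathcal{S}_n^-}\frac{1}{2n}\sum_{\ell=1}^{n-1}\log(1-2\sigma^2\beta_\ell).$$
   Context: The sequences $\alpha_\ell,\beta_\ell$ depend on the parameters $s$ and $\eta$ (and on the fixed $a,\sigma^2$). Logarithms are natural. *)

theory Defs
  imports "HOL-Probability.Probability"
begin

primrec ar_proc :: "real \<Rightarrow> (nat \<Rightarrow> 'a \<Rightarrow> real) \<Rightarrow> nat \<Rightarrow> 'a \<Rightarrow> real" where
  "ar_proc a Z 0 \<omega> = 0"
| "ar_proc a Z (Suc i) \<omega> = a * ar_proc a Z i \<omega> + Z (Suc i) \<omega>"

definition a_ML :: "(nat \<Rightarrow> real) \<Rightarrow> nat \<Rightarrow> real" where
  "a_ML u n = (\<Sum>i=1..n-1. u i * u (i+1)) / (\<Sum>i=1..n-1. (u i)^2)"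

definition P_plus :: "'a measure \<Rightarrow> (nat \<Rightarrow> 'a \<Rightarrow> real) \<Rightarrow> nat \<Rightarrow> real \<Rightarrow> real \<Rightarrow> real" where
  "P_plus M Z n a \<eta> = - (1 / real n) *
     ln (measure M {\<omega> \<in> space M. a_ML (\<lambda>i. ar_proc a Z i \<omega>) n - a > \<eta>})"

definition P_minus :: "'a measure \<Rightarrow> (nat \<Rightarrow> 'a \<Rightarrow> real) \<Rightarrow> nat \<Rightarrow> real \<Rightarrow> real \<Rightarrow> real" where
  "P_minus M Z n a \<eta> = - (1 / real n) *
     ln (measure M {\<omega> \<in> space M. a_ML (\<lambda>i. ar_proc a Z i \<omega>) n - a < - \<eta>})"

text \<open>Sequences alpha_l, beta_l for l >= 1 (index 0 is unused).
  Parameter s2 is the variance sigma^2.\<close>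
fun alpha_seq :: "real \<Rightarrow> real \<Rightarrow> real \<Rightarrow> real \<Rightarrow> nat \<Rightarrow> real" where
  "alpha_seq a s2 \<eta> s 0 = 0"
| "alpha_seq a s2 \<eta> s (Suc 0) = (s2 * s^2 - 2 * \<eta> * s) / 2"
| "alpha_seq a s2 \<eta> s (Suc (Suc l)) =
     ((a^2 + 2 * s2 * s * (a + \<eta>)) * alpha_seq a s2 \<eta> s (Suc l) + (s2 * s^2 - 2 * \<eta> * s) / 2)
     / (1 - 2 * s2 * alpha_seq a s2 \<eta> s (Suc l))"

fun beta_seq :: "real \<Rightarrow> real \<Rightarrow> real \<Rightarrow> real \<Rightarrow> nat \<Rightarrow> real" where
  "beta_seq a s2 \<eta> s 0 = 0"
| "beta_seq a s2 \<eta> s (Suc 0) = (s2 * s^2 - 2 * \<eta> * s) / 2"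
| "beta_seq a s2 \<eta> s (Suc (Suc l)) =
     ((a^2 + 2 * s2 * s * (- a + \<eta>)) * beta_seq a s2 \<eta> s (Suc l) + (s2 * s^2 - 2 * \<eta> * s) / 2)
     / (1 - 2 * s2 * beta_seq a s2 \<eta> s (Suc l))"

definition S_plus :: "real \<Rightarrow> real \<Rightarrow> real \<Rightarrow> nat \<Rightarrow> real set" where
  "S_plus a s2 \<eta> n = {s. s > 0 \<and> (\<forall>l\<in>{1..n}. alpha_seq a s2 \<eta> s l < 1 / (2 * s2))}"

definition S_minus :: "real \<Rightarrow> real \<Rightarrow> real \<Rightarrow> nat \<Rightarrow> real set" where
  "S_minus a s2 \<eta> n = {s. s > 0 \<and> (\<forall>l\<in>{1..n}. beta_seq a s2 \<eta> s l < 1 / (2 * s2))}"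

end

theory Submission
  imports Defs
begin

(* Chernoff bound. For c = 1 (upper tail) or c = -1 (lower tail) let
     T = c * (sum_{i=1}^{n-1} U_i Z_{i+1}) - eta * (sum_{i=1}^{n-1} U_i^2).
   Since U_{i+1} = a U_i + Z_{i+1}, T = (sum_{i=1}^{n-1} U_i^2) * (c (a_ML - a) - eta), so the
   tail event E satisfies {T > 0} <= E <= {T >= 0}, and P(E) <= E[exp (s T)] for every s >= 0.
   This moment generating function is computed by integrating out Z_n, Z_{n-1}, ..., Z_1 in turn:
   each step is the Gaussian integral of the exponential of a quadratic in the newest variable,
   which contributes a factor (1 - 2 sigma^2 gamma)^(-1/2) and replaces the coefficient gamma of
   U_k^2 by its image under a Riccati map whose iterates from 0 are alpha_l (resp. beta_l).
   Taking logarithms gives the bound, since P(E) > 0: T is positive on a box of positive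
   Gaussian probability. *)

lemma nn_integral_normal_density_exp_quadratic:
  fixes \<sigma> \<beta> \<gamma> :: real
  assumes "\<sigma> > 0" and "1 - 2 * \<sigma>\<^sup>2 * \<gamma> > 0"
  shows "(\<integral>\<^sup>+z. ennreal (normal_density 0 \<sigma> z * exp (\<beta> * z + \<gamma> * z\<^sup>2)) \<partial>lborel)
           = ennreal (exp (\<beta>\<^sup>2 * \<sigma>\<^sup>2 / (2 * (1 - 2 * \<sigma>\<^sup>2 * \<gamma>))) / sqrt (1 - 2 * \<sigma>\<^sup>2 * \<gamma>))"
proof -
  define d where "d = 1 - 2 * \<sigma>\<^sup>2 * \<gamma>"
  have "d > 0" using assms(2) by (simp add: d_def)
  define \<sigma>' where "\<sigma>' = \<sigma> / sqrt d"
  define \<mu> where "\<mu> = \<beta> * \<sigma>\<^sup>2 / d"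
  define C where "C = exp (\<beta>\<^sup>2 * \<sigma>\<^sup>2 / (2 * d)) / sqrt d"
  have "C \<ge> 0" using \<open>d > 0\<close> by (simp add: C_def)
  have var': "\<sigma>'\<^sup>2 = \<sigma>\<^sup>2 / d"
    using \<open>d > 0\<close> by (simp add: \<sigma>'_def power_divide)
  have exponent: "- (z - 0)\<^sup>2 / (2 * \<sigma>\<^sup>2) + (\<beta> * z + \<gamma> * z\<^sup>2)
      = \<beta>\<^sup>2 * \<sigma>\<^sup>2 / (2 * d) + - (z - \<mu>)\<^sup>2 / (2 * \<sigma>'\<^sup>2)" for z
  proof -
    have \<gamma>_eq: "\<gamma> = (1 - d) / (2 * \<sigma>\<^sup>2)" using assms(1) by (simp add: d_def field_simps)
    show ?thesis
      unfolding var' \<mu>_def \<gamma>_eq using \<open>d > 0\<close> assms(1) by (simp add: field_simps power2_eq_square)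
  qed
  have factor: "1 / sqrt (2 * pi * \<sigma>\<^sup>2) = 1 / sqrt d * (1 / sqrt (2 * pi * \<sigma>'\<^sup>2))"
    using \<open>d > 0\<close> assms(1) unfolding var' by (simp add: real_sqrt_divide real_sqrt_mult field_simps)
  have "normal_density 0 \<sigma> z * exp (\<beta> * z + \<gamma> * z\<^sup>2)
      = 1 / sqrt (2 * pi * \<sigma>\<^sup>2) * exp (- (z - 0)\<^sup>2 / (2 * \<sigma>\<^sup>2) + (\<beta> * z + \<gamma> * z\<^sup>2))" for z
    by (simp add: normal_density_def mult_exp_exp algebra_simps)
  also have "\<dots> z = C * normal_density \<mu> \<sigma>' z" for z
    unfolding exponent factor normal_density_def C_def exp_add by simp
  finally have density: "normal_density 0 \<sigma> z * exp (\<beta> * z + \<gamma> * z\<^sup>2) = C * normal_density \<mu> \<sigma>' z" for z .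
  have "(\<integral>\<^sup>+z. ennreal (normal_density 0 \<sigma> z * exp (\<beta> * z + \<gamma> * z\<^sup>2)) \<partial>lborel)
      = (\<integral>\<^sup>+z. ennreal C * ennreal (normal_density \<mu> \<sigma>' z) \<partial>lborel)"
    using \<open>d > 0\<close> by (intro nn_integral_cong) (simp add: density ennreal_mult \<open>C \<ge> 0\<close>)
  also have "\<dots> = ennreal C"
    using assms(1) \<open>d > 0\<close>
    by (simp add: nn_integral_cmult nn_integral_eq_integral integrable_normal_density \<sigma>'_def)
  finally show ?thesis unfolding C_def d_def .
qed

lemma ln_prod_inverse_sqrt:
  fixes f :: "'a \<Rightarrow> real"
  assumes "finite A" and "\<And>l. l \<in> A \<Longrightarrow> 0 < f l"
  shows "ln (\<Prod>l\<in>A. 1 / sqrt (f l)) = - (\<Sum>l\<in>A. ln (f l)) / 2"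
proof -
  have "ln (\<Prod>l\<in>A. 1 / sqrt (f l)) = (\<Sum>l\<in>A. ln (1 / sqrt (f l)))"
  proof (rule ln_prod[OF assms(1)])
    show "1 / sqrt (f l) \<noteq> 0" if "l \<in> A" for l
      using assms(2)[OF that] by simp
  qed
  also have "\<dots> = (\<Sum>l\<in>A. - ln (f l) / 2)"
  proof (rule sum.cong[OF refl])
    show "ln (1 / sqrt (f l)) = - ln (f l) / 2" if "l \<in> A" for l
      using assms(2)[OF that] by (simp add: ln_div ln_sqrt)
  qed
  finally show ?thesis by (simp add: sum_negf sum_divide_distrib)
qed

primrec ar_seq :: "real \<Rightarrow> (nat \<Rightarrow> real) \<Rightarrow> nat \<Rightarrow> real" where
  "ar_seq a x 0 = 0"
| "ar_seq a x (Suc i) = a * ar_seq a x i + x (Suc i)"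

lemma ar_proc_eq_ar_seq: "ar_proc a Z i \<omega> = ar_seq a (\<lambda>j. Z j \<omega>) i"
  by (induct i) auto

lemma ar_seq_cong: "(\<And>j. j \<in> {1..i} \<Longrightarrow> x j = y j) \<Longrightarrow> ar_seq a x i = ar_seq a y i"
  by (induct i) auto

lemma measurable_ar_seq:
  "i \<le> k \<Longrightarrow> (\<lambda>x. ar_seq a x i) \<in> borel_measurable (PiM {1..k} (\<lambda>_. borel))"
proof (induct i)
  case (Suc i)
  then have "(\<lambda>x. x (Suc i)) \<in> borel_measurable (PiM {1..k} (\<lambda>_. borel))"
    by (intro measurable_component_singleton) auto
  with Suc show ?case by simp
qed simp

lemmas measurable_ar_seq_last [measurable] = measurable_ar_seq[OF order.refl]

definition ml_excess :: "real \<Rightarrow> real \<Rightarrow> real \<Rightarrow> nat \<Rightarrow> (nat \<Rightarrow> real) \<Rightarrow> real" where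
  "ml_excess a c \<eta> n x = (\<Sum>i=1..n-1. c * ar_seq a x i * x (i+1) - \<eta> * (ar_seq a x i)\<^sup>2)"

lemma ml_excess_Suc:
  "ml_excess a c \<eta> (Suc k) x
     = ml_excess a c \<eta> k x + (c * ar_seq a x k * x (Suc k) - \<eta> * (ar_seq a x k)\<^sup>2)"
  by (cases k) (simp_all add: ml_excess_def)

lemma ml_excess_cong:
  assumes "\<And>j. j \<in> {1..n} \<Longrightarrow> x j = y j"
  shows "ml_excess a c \<eta> n x = ml_excess a c \<eta> n y"
  unfolding ml_excess_def
proof (intro sum.cong refl)
  fix i assume "i \<in> {1..n-1}"
  with assms have "ar_seq a x i = ar_seq a y i" by (intro ar_seq_cong) auto
  moreover from \<open>i \<in> {1..n-1}\<close> assms have "x (i+1) = y (i+1)" by auto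
  ultimately
  show "c * ar_seq a x i * x (i+1) - \<eta> * (ar_seq a x i)\<^sup>2
      = c * ar_seq a y i * y (i+1) - \<eta> * (ar_seq a y i)\<^sup>2" by simp
qed

lemma ar_seq_restrict: "i \<le> k \<Longrightarrow> ar_seq a (restrict x {1..k}) i = ar_seq a x i"
  by (intro ar_seq_cong) auto

lemma ml_excess_restrict: "ml_excess a c \<eta> k (restrict x {1..k}) = ml_excess a c \<eta> k x"
  by (intro ml_excess_cong) auto

lemma measurable_ml_excess [measurable]:
  "(\<lambda>x. ml_excess a c \<eta> k x) \<in> borel_measurable (PiM {1..k} (\<lambda>_. borel))"
  unfolding ml_excess_def
proof (rule borel_measurable_sum)
  fix i assume "i \<in> {1..k-1}"
  then have [measurable]: "(\<lambda>x. ar_seq a x i) \<in> borel_measurable (PiM {1..k} (\<lambda>_. borel))"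
    by (intro measurable_ar_seq) auto
  from \<open>i \<in> {1..k-1}\<close> have [measurable]: "(\<lambda>x. x (i+1)) \<in> borel_measurable (PiM {1..k} (\<lambda>_. borel))"
    by (intro measurable_component_singleton) auto
  show "(\<lambda>x. c * ar_seq a x i * x (i+1) - \<eta> * (ar_seq a x i)\<^sup>2) \<in> borel_measurable (PiM {1..k} (\<lambda>_. borel))"
    by measurable
qed

lemma ml_excess_eq:
  "ml_excess a c \<eta> n x = (\<Sum>i=1..n-1. (ar_seq a x i)\<^sup>2) * (c * (a_ML (ar_seq a x) n - a) - \<eta>)"
proof -
  define D where "D = (\<Sum>i=1..n-1. (ar_seq a x i)\<^sup>2)"
  define N where "N = (\<Sum>i=1..n-1. ar_seq a x i * ar_seq a x (i+1))"
  have N_eq: "N = a * D + (\<Sum>i=1..n-1. ar_seq a x i * x (i+1))"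
    by (simp add: N_def D_def sum.distrib sum_distrib_left algebra_simps power2_eq_square)
  have excess: "ml_excess a c \<eta> n x = c * (N - a * D) - \<eta> * D"
    by (simp add: N_eq D_def ml_excess_def sum.distrib sum_distrib_left sum_subtractf algebra_simps)
  show ?thesis
  proof (cases "D = 0")
    case True
    then have "\<forall>i\<in>{1..n-1}. ar_seq a x i = 0"
      by (simp add: D_def sum_nonneg_eq_0_iff)
    then have "N = 0" by (simp add: N_def)
    with True show ?thesis by (simp add: excess D_def)
  next
    case False
    have "a_ML (ar_seq a x) n = N / D" by (simp add: a_ML_def N_def D_def)
    with False show ?thesis unfolding D_def[symmetric] by (simp add: excess field_simps)
  qed
qed

primrec ar_box_bound :: "real \<Rightarrow> real \<Rightarrow> nat \<Rightarrow> real" where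
  "ar_box_bound a \<eta> 0 = 0"
| "ar_box_bound a \<eta> (Suc i) = (2 * a + \<eta>) * ar_box_bound a \<eta> i + 1"

lemma ar_box_bound_nonneg: "0 \<le> a \<Longrightarrow> 0 \<le> \<eta> \<Longrightarrow> 0 \<le> ar_box_bound a \<eta> i"
  by (induct i) auto

(* The lower end of the j-th interval dominates eta c^(j-1) U_(j-1), which makes every summand
   of ml_excess positive; the upper end keeps c^j U_j below ar_box_bound a eta j. *)
definition ar_box :: "real \<Rightarrow> real \<Rightarrow> real \<Rightarrow> nat \<Rightarrow> (nat \<Rightarrow> real) set" where
  "ar_box a \<eta> c n = {x. \<forall>j\<in>{1..n}. c ^ j * x j \<in>
     {(a + \<eta>) * ar_box_bound a \<eta> (j - 1) <..< (a + \<eta>) * ar_box_bound a \<eta> (j - 1) + 1}}"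

lemma ar_boxD:
  "x \<in> ar_box a \<eta> c n \<Longrightarrow> j \<in> {1..n} \<Longrightarrow>
    (a + \<eta>) * ar_box_bound a \<eta> (j - 1) < c ^ j * x j
    \<and> c ^ j * x j < (a + \<eta>) * ar_box_bound a \<eta> (j - 1) + 1"
  unfolding ar_box_def by auto

lemma ar_seq_on_ar_box:
  fixes a \<eta> c :: real
  assumes "c\<^sup>2 = 1" and "0 \<le> a" and "0 \<le> \<eta>" and "x \<in> ar_box a \<eta> c n" and "i \<le> n"
  shows "0 \<le> c ^ i * ar_seq a x i \<and> c ^ i * ar_seq a x i \<le> ar_box_bound a \<eta> i
    \<and> (1 \<le> i \<longrightarrow> 0 < c ^ i * ar_seq a x i)"
  using \<open>i \<le> n\<close>
proof (induct i)
  case (Suc i)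
  define B where "B = ar_box_bound a \<eta> i"
  define V where "V = c ^ i * ar_seq a x i"
  define W where "W = c ^ Suc i * x (Suc i)"
  have V: "0 \<le> V" "V \<le> B" using Suc by (auto simp: V_def B_def)
  have W: "(a + \<eta>) * B < W" "W < (a + \<eta>) * B + 1"
    using ar_boxD[OF \<open>x \<in> ar_box a \<eta> c n\<close>, of "Suc i"] Suc.prems by (simp_all add: W_def B_def)
  have "0 \<le> B" using assms by (simp add: B_def ar_box_bound_nonneg)
  have aV: "0 \<le> a * V" "a * V \<le> a * B" using V \<open>0 \<le> a\<close> by (simp_all add: mult_left_mono)
  moreover have "c = 1 \<or> c = -1" using \<open>c\<^sup>2 = 1\<close> by (simp add: power2_eq_1_iff)
  ultimately have "- (a * V) \<le> c * a * V" "c * a * V \<le> a * B" by auto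
  moreover have "0 \<le> \<eta> * B" using \<open>0 \<le> \<eta>\<close> \<open>0 \<le> B\<close> by simp
  ultimately have "0 < c * a * V + W" "c * a * V + W \<le> ar_box_bound a \<eta> (Suc i)"
    using W aV by (simp_all add: B_def algebra_simps)
  moreover have "c ^ Suc i * ar_seq a x (Suc i) = c * a * V + W"
    by (simp add: V_def W_def algebra_simps)
  ultimately show ?case by simp
qed simp

lemma ml_excess_pos_on_ar_box:
  fixes a \<eta> c :: real
  assumes "c\<^sup>2 = 1" and "0 \<le> a" and "0 \<le> \<eta>" and "2 \<le> n" and "x \<in> ar_box a \<eta> c n"
  shows "0 < ml_excess a c \<eta> n x"
  unfolding ml_excess_def
proof (rule sum_pos)
  show "finite {1..n-1}" "{1..n-1} \<noteq> {}" using \<open>2 \<le> n\<close> by auto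
  fix i assume i: "i \<in> {1..n-1}"
  define B where "B = ar_box_bound a \<eta> i"
  define V where "V = c ^ i * ar_seq a x i"
  define W where "W = c ^ Suc i * x (Suc i)"
  have V: "0 < V" "V \<le> B"
    using ar_seq_on_ar_box[OF assms(1-3,5), of i] i by (auto simp: V_def B_def)
  have "Suc i \<in> {1..n}" using i by auto
  from ar_boxD[OF \<open>x \<in> ar_box a \<eta> c n\<close> this] have W: "(a + \<eta>) * B < W"
    by (simp add: W_def B_def)
  have "\<eta> * V \<le> (a + \<eta>) * B"
    using V assms(2,3) by (intro mult_mono) auto
  with V W have "0 < V * (W - \<eta> * V)" by simp
  moreover have "V * (W - \<eta> * V)
      = (c ^ i)\<^sup>2 * (c * ar_seq a x i * x (i+1) - \<eta> * (ar_seq a x i)\<^sup>2)"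
    by (simp add: V_def W_def power2_eq_square algebra_simps)
  moreover have "(c ^ i)\<^sup>2 = 1"
    using \<open>c\<^sup>2 = 1\<close> by (metis power_mult mult.commute power_one)
  ultimately show "0 < c * ar_seq a x i * x (i+1) - \<eta> * (ar_seq a x i)\<^sup>2" by simp
qed

definition riccati_step :: "real \<Rightarrow> real \<Rightarrow> real \<Rightarrow> real \<Rightarrow> real \<Rightarrow> real \<Rightarrow> real" where
  "riccati_step a s2 \<eta> c s \<gamma> =
     ((a\<^sup>2 + 2 * s2 * s * (c * a + \<eta>)) * \<gamma> + (s2 * s\<^sup>2 - 2 * \<eta> * s) / 2) / (1 - 2 * s2 * \<gamma>)"

lemma nn_integral_normal_density_exp_step:
  fixes a s2 \<eta> c s \<gamma> t u :: real
  assumes "s2 > 0" and "c\<^sup>2 = 1" and "1 - 2 * s2 * \<gamma> > 0"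
  shows "(\<integral>\<^sup>+z. ennreal (normal_density 0 (sqrt s2) z
              * exp (s * (t + (c * u * z - \<eta> * u\<^sup>2)) + \<gamma> * (a * u + z)\<^sup>2)) \<partial>lborel)
         = ennreal (1 / sqrt (1 - 2 * s2 * \<gamma>) * exp (s * t + riccati_step a s2 \<eta> c s \<gamma> * u\<^sup>2))"
proof -
  define d where "d = 1 - 2 * s2 * \<gamma>"
  define B where "B = s * t - s * \<eta> * u\<^sup>2 + \<gamma> * a\<^sup>2 * u\<^sup>2"
  define \<beta> where "\<beta> = (c * s + 2 * \<gamma> * a) * u"
  have "d > 0" using assms(3) by (simp add: d_def)
  have split: "normal_density 0 (sqrt s2) z * exp (s * (t + (c * u * z - \<eta> * u\<^sup>2)) + \<gamma> * (a * u + z)\<^sup>2)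
      = exp B * (normal_density 0 (sqrt s2) z * exp (\<beta> * z + \<gamma> * z\<^sup>2))" for z
    by (simp add: B_def \<beta>_def mult_exp_exp power2_eq_square algebra_simps)
  have exponent: "B + \<beta>\<^sup>2 * s2 / (2 * d) = s * t + riccati_step a s2 \<eta> c s \<gamma> * u\<^sup>2"
  proof -
    have "c * c = 1" using assms(2) by (simp add: power2_eq_square)
    then have "\<beta>\<^sup>2 = (s\<^sup>2 + 4 * c * \<gamma> * a * s + 4 * \<gamma>\<^sup>2 * a\<^sup>2) * u\<^sup>2"
      unfolding \<beta>_def by (simp add: power2_eq_square algebra_simps)
    then show ?thesis
      unfolding B_def riccati_step_def d_def using \<open>d > 0\<close>[unfolded d_def]
      by (simp add: field_simps power2_eq_square)
  qed
  have "(\<integral>\<^sup>+z. ennreal (normal_density 0 (sqrt s2) z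
              * exp (s * (t + (c * u * z - \<eta> * u\<^sup>2)) + \<gamma> * (a * u + z)\<^sup>2)) \<partial>lborel)
      = ennreal (exp B) * (\<integral>\<^sup>+z. ennreal (normal_density 0 (sqrt s2) z * exp (\<beta> * z + \<gamma> * z\<^sup>2)) \<partial>lborel)"
    unfolding split by (simp add: ennreal_mult nn_integral_cmult)
  also have "\<dots> = ennreal (exp B * (exp (\<beta>\<^sup>2 * s2 / (2 * d)) / sqrt d))"
    using nn_integral_normal_density_exp_quadratic[of "sqrt s2" \<gamma> \<beta>] assms(1) \<open>d > 0\<close>
    by (simp add: d_def flip: ennreal_mult)
  also have "\<dots> = ennreal (1 / sqrt d * exp (s * t + riccati_step a s2 \<eta> c s \<gamma> * u\<^sup>2))"
    by (simp flip: exponent add: exp_add)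
  finally show ?thesis unfolding d_def .
qed

lemma (in prob_space) nn_integral_indep_var:
  assumes "indep_var S X T Y" and [measurable]: "h \<in> borel_measurable (S \<Otimes>\<^sub>M T)"
  shows "(\<integral>\<^sup>+\<omega>. h (X \<omega>, Y \<omega>) \<partial>M) = (\<integral>\<^sup>+\<omega>. \<integral>\<^sup>+y. h (X \<omega>, y) \<partial>distr M T Y \<partial>M)"
proof -
  have [measurable]: "X \<in> measurable M S" "Y \<in> measurable M T"
    and joint: "distr M (S \<Otimes>\<^sub>M T) (\<lambda>\<omega>. (X \<omega>, Y \<omega>)) = distr M S X \<Otimes>\<^sub>M distr M T Y"
    using assms(1) by (simp_all add: indep_var_distribution_eq)
  interpret Y: prob_space "distr M T Y" by (rule prob_space_distr) simp
  have "(\<integral>\<^sup>+\<omega>. h (X \<omega>, Y \<omega>) \<partial>M) = (\<integral>\<^sup>+p. h p \<partial>distr M (S \<Otimes>\<^sub>M T) (\<lambda>\<omega>. (X \<omega>, Y \<omega>)))"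
    by (rule nn_integral_distr[symmetric]) measurable
  also have "\<dots> = (\<integral>\<^sup>+x. \<integral>\<^sup>+y. h (x, y) \<partial>distr M T Y \<partial>distr M S X)"
    unfolding joint by (simp add: Y.nn_integral_fst)
  also have "\<dots> = (\<integral>\<^sup>+\<omega>. \<integral>\<^sup>+y. h (X \<omega>, y) \<partial>distr M T Y \<partial>M)"
    by (simp add: nn_integral_distr Y.borel_measurable_nn_integral_fst)
  finally show ?thesis .
qed

locale gaussian_noise = prob_space M for M :: "'a measure" +
  fixes Z :: "nat \<Rightarrow> 'a \<Rightarrow> real" and s2 :: real
  assumes variance_pos: "s2 > 0"
    and indep: "indep_vars (\<lambda>_. borel) Z {1..}"
    and distributed_normal: "\<And>i. i \<ge> 1 \<Longrightarrow> distributed M lborel (Z i) (normal_density 0 (sqrt s2))"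
begin

lemma measurable_noise [measurable]: "1 \<le> i \<Longrightarrow> Z i \<in> borel_measurable M"
  using indep by (auto simp: indep_vars_def)

lemma measurable_noise_restrict [measurable]:
  "(\<lambda>\<omega>. restrict (\<lambda>i. Z i \<omega>) {1..k}) \<in> measurable M (PiM {1..k} (\<lambda>_. borel))"
  by (rule measurable_restrict) simp

lemma nn_integral_split_last:
  fixes h :: "(nat \<Rightarrow> real) \<times> real \<Rightarrow> ennreal"
  assumes h: "h \<in> borel_measurable (PiM {1..k} (\<lambda>_. borel) \<Otimes>\<^sub>M borel)"
  shows "(\<integral>\<^sup>+\<omega>. h (restrict (\<lambda>i. Z i \<omega>) {1..k}, Z (Suc k) \<omega>) \<partial>M)
    = (\<integral>\<^sup>+\<omega>. \<integral>\<^sup>+z. normal_density 0 (sqrt s2) z * h (restrict (\<lambda>i. Z i \<omega>) {1..k}, z) \<partial>lborel \<partial>M)"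
proof -
  define S where "S = PiM {1..k} (\<lambda>_::nat. borel :: real measure)"
  \<comment> \<open>the singleton product T is needed because indep_var relates variables of one type\<close>
  define T where "T = PiM {Suc k} (\<lambda>_::nat. borel :: real measure)"
  define W where "W \<omega> = restrict (\<lambda>i. Z i \<omega>) {1..k}" for \<omega>
  define R where "R \<omega> = restrict (\<lambda>i. Z i \<omega>) {Suc k}" for \<omega>
  have W[measurable]: "W \<in> measurable M S" unfolding W_def[abs_def] S_def by measurable
  have [measurable]: "R \<in> measurable M T" unfolding R_def[abs_def] T_def by (rule measurable_restrict) simp
  have [measurable]: "(\<lambda>r. r (Suc k)) \<in> borel_measurable T"
    unfolding T_def by (rule measurable_component_singleton) simp
  have [measurable]: "h \<in> borel_measurable (S \<Otimes>\<^sub>M borel)" using h by (simp add: S_def)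
  define h' where "h' p = h (fst p, snd p (Suc k))" for p
  have [measurable]: "h' \<in> borel_measurable (S \<Otimes>\<^sub>M T)" unfolding h'_def by measurable
  have inner: "(\<integral>\<^sup>+r. h' (v, r) \<partial>distr M T R)
      = (\<integral>\<^sup>+z. normal_density 0 (sqrt s2) z * h (v, z) \<partial>lborel)" if "v \<in> space S" for v
  proof -
    have [measurable]: "(\<lambda>z. h (v, z)) \<in> borel_measurable borel"
      using measurable_Pair2[OF _ that] by measurable
    have "(\<integral>\<^sup>+r. h' (v, r) \<partial>distr M T R) = (\<integral>\<^sup>+\<omega>. h (v, Z (Suc k) \<omega>) \<partial>M)"
      by (simp add: nn_integral_distr h'_def R_def)
    also have "\<dots> = (\<integral>\<^sup>+z. normal_density 0 (sqrt s2) z * h (v, z) \<partial>lborel)"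
      by (rule distributed_nn_integral[OF distributed_normal, symmetric]) simp_all
    finally show ?thesis .
  qed
  have "indep_var S W T R"
    unfolding S_def T_def W_def[abs_def] R_def[abs_def] by (rule indep_var_restrict[OF indep]) auto
  then have "(\<integral>\<^sup>+\<omega>. h' (W \<omega>, R \<omega>) \<partial>M) = (\<integral>\<^sup>+\<omega>. \<integral>\<^sup>+r. h' (W \<omega>, r) \<partial>distr M T R \<partial>M)"
    by (rule nn_integral_indep_var) measurable
  also have "\<dots> = (\<integral>\<^sup>+\<omega>. \<integral>\<^sup>+z. normal_density 0 (sqrt s2) z * h (W \<omega>, z) \<partial>lborel \<partial>M)"
    using measurable_space[OF W] by (intro nn_integral_cong inner)
  finally show ?thesis by (simp add: h'_def R_def W_def)
qed

lemma measurable_ar_proc [measurable]: "(\<lambda>\<omega>. ar_proc a Z i \<omega>) \<in> borel_measurable M"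
  by (induct i) simp_all

definition mgf :: "real \<Rightarrow> real \<Rightarrow> real \<Rightarrow> real \<Rightarrow> nat \<Rightarrow> real \<Rightarrow> ennreal" where
  "mgf a \<eta> c s k \<gamma> =
     (\<integral>\<^sup>+\<omega>. ennreal (exp (s * ml_excess a c \<eta> k (\<lambda>j. Z j \<omega>) + \<gamma> * (ar_seq a (\<lambda>j. Z j \<omega>) k)\<^sup>2)) \<partial>M)"

lemma mgf_0: "mgf a \<eta> c s 0 \<gamma> = 1"
  by (simp add: mgf_def ml_excess_def emeasure_space_1)

lemma mgf_Suc:
  assumes "c\<^sup>2 = 1" and "1 - 2 * s2 * \<gamma> > 0"
  shows "mgf a \<eta> c s (Suc k) \<gamma>
    = ennreal (1 / sqrt (1 - 2 * s2 * \<gamma>)) * mgf a \<eta> c s k (riccati_step a s2 \<eta> c s \<gamma>)"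
proof -
  define W where "W \<omega> = restrict (\<lambda>i. Z i \<omega>) {1..k}" for \<omega>
  define h where "h p = ennreal (exp (s * (ml_excess a c \<eta> k (fst p)
      + (c * ar_seq a (fst p) k * snd p - \<eta> * (ar_seq a (fst p) k)\<^sup>2))
      + \<gamma> * (a * ar_seq a (fst p) k + snd p)\<^sup>2))" for p
  define F where "F v = ennreal (exp (s * ml_excess a c \<eta> k v
      + riccati_step a s2 \<eta> c s \<gamma> * (ar_seq a v k)\<^sup>2))" for v
  have [measurable]: "h \<in> borel_measurable (PiM {1..k} (\<lambda>_. borel) \<Otimes>\<^sub>M borel)"
    unfolding h_def by measurable
  have [measurable]: "F \<in> borel_measurable (PiM {1..k} (\<lambda>_. borel))"
    unfolding F_def by measurable
  have "mgf a \<eta> c s (Suc k) \<gamma> = (\<integral>\<^sup>+\<omega>. h (W \<omega>, Z (Suc k) \<omega>) \<partial>M)"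
    unfolding h_def fst_conv snd_conv W_def ml_excess_restrict ar_seq_restrict[OF order.refl]
    by (simp add: mgf_def ml_excess_Suc)
  also have "\<dots> = (\<integral>\<^sup>+\<omega>. \<integral>\<^sup>+z. normal_density 0 (sqrt s2) z * h (W \<omega>, z) \<partial>lborel \<partial>M)"
    unfolding W_def by (rule nn_integral_split_last) measurable
  also have "\<dots> = (\<integral>\<^sup>+\<omega>. ennreal (1 / sqrt (1 - 2 * s2 * \<gamma>)) * F (W \<omega>) \<partial>M)"
    using nn_integral_normal_density_exp_step[OF variance_pos assms] assms(2) by (intro nn_integral_cong) (simp add: h_def F_def flip: ennreal_mult)
  also have "\<dots> = ennreal (1 / sqrt (1 - 2 * s2 * \<gamma>)) * (\<integral>\<^sup>+\<omega>. F (W \<omega>) \<partial>M)"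
    unfolding W_def by (rule nn_integral_cmult) measurable
  also have "(\<integral>\<^sup>+\<omega>. F (W \<omega>) \<partial>M) = mgf a \<eta> c s k (riccati_step a s2 \<eta> c s \<gamma>)"
    unfolding F_def W_def ml_excess_restrict ar_seq_restrict[OF order.refl] mgf_def ..
  finally show ?thesis .
qed

lemma mgf_eq_prod:
  assumes "c\<^sup>2 = 1" and q_Suc: "\<And>j. q (Suc j) = riccati_step a s2 \<eta> c s (q j)"
    and "\<And>l. l \<in> {j..<j+k} \<Longrightarrow> q l < 1 / (2 * s2)"
  shows "mgf a \<eta> c s k (q j) = (\<Prod>l\<in>{j..<j+k}. ennreal (1 / sqrt (1 - 2 * s2 * q l)))"
  using assms(3)
proof (induct k arbitrary: j)
  case 0
  show ?case by (simp add: mgf_0)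
next
  case (Suc k)
  have "1 - 2 * s2 * q j > 0"
    using Suc.prems[of j] variance_pos by (simp add: field_simps)
  then have "mgf a \<eta> c s (Suc k) (q j) = ennreal (1 / sqrt (1 - 2 * s2 * q j)) * mgf a \<eta> c s k (q (Suc j))"
    by (simp add: mgf_Suc[OF \<open>c\<^sup>2 = 1\<close>] q_Suc)
  also have "mgf a \<eta> c s k (q (Suc j)) = (\<Prod>l\<in>{Suc j..<Suc j+k}. ennreal (1 / sqrt (1 - 2 * s2 * q l)))"
    using Suc.prems by (intro Suc.hyps) auto
  also have "ennreal (1 / sqrt (1 - 2 * s2 * q j)) * (\<Prod>l\<in>{Suc j..<Suc j+k}. ennreal (1 / sqrt (1 - 2 * s2 * q l)))
      = (\<Prod>l\<in>{j..<j + Suc k}. ennreal (1 / sqrt (1 - 2 * s2 * q l)))"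
    by (subst prod.atLeast_Suc_lessThan[of j "j + Suc k"]) simp_all
  finally show ?case .
qed

lemma emeasure_le_mgf:
  assumes "E \<in> sets M" and "0 \<le> s" and "\<And>\<omega>. \<omega> \<in> E \<Longrightarrow> 0 \<le> ml_excess a c \<eta> n (\<lambda>j. Z j \<omega>)"
  shows "emeasure M E \<le> mgf a \<eta> c s n 0"
proof -
  have "emeasure M E = (\<integral>\<^sup>+\<omega>. indicator E \<omega> \<partial>M)"
    using assms(1) by simp
  also have "\<dots> \<le> mgf a \<eta> c s n 0"
    unfolding mgf_def
  proof (intro nn_integral_mono)
    fix \<omega>
    show "indicator E \<omega> \<le> ennreal (exp (s * ml_excess a c \<eta> n (\<lambda>j. Z j \<omega>) + 0 * (ar_seq a (\<lambda>j. Z j \<omega>) n)\<^sup>2))"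
      using assms(2) assms(3)[of \<omega>] by (cases "\<omega> \<in> E") (simp_all add: ennreal_ge_1)
  qed
  finally show ?thesis .
qed

lemma prob_le_prod_riccati:
  assumes "c\<^sup>2 = 1" and "0 \<le> s" and "q 0 = 0" and "\<And>j. q (Suc j) = riccati_step a s2 \<eta> c s (q j)"
    and q_less: "\<And>l. l \<in> {1..<n} \<Longrightarrow> q l < 1 / (2 * s2)"
    and "E \<in> sets M" and "\<And>\<omega>. \<omega> \<in> E \<Longrightarrow> 0 \<le> ml_excess a c \<eta> n (\<lambda>j. Z j \<omega>)"
  shows "prob E \<le> (\<Prod>l\<in>{1..<n}. 1 / sqrt (1 - 2 * s2 * q l))"
proof -
  have pos: "1 - 2 * s2 * q l > 0" if "l \<in> {1..<n}" for l
    using q_less[OF that] variance_pos by (simp add: field_simps)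
  have "q l < 1 / (2 * s2)" if "l \<in> {0..<0+n}" for l
    using q_less[of l] that \<open>q 0 = 0\<close> variance_pos by (cases "l = 0") auto
  then have "emeasure M E \<le> (\<Prod>l\<in>{0..<n}. ennreal (1 / sqrt (1 - 2 * s2 * q l)))"
    using emeasure_le_mgf[OF assms(6,2,7)] mgf_eq_prod[where q=q and j=0 and k=n, OF assms(1) assms(4)] \<open>q 0 = 0\<close> by simp
  also have "\<dots> = (\<Prod>l\<in>{1..<n}. ennreal (1 / sqrt (1 - 2 * s2 * q l)))"
    using \<open>q 0 = 0\<close> by (cases "n = 0") (simp_all add: prod.atLeast_Suc_lessThan[of 0 n])
  also have "\<dots> = ennreal (\<Prod>l\<in>{1..<n}. 1 / sqrt (1 - 2 * s2 * q l))"
    using pos by (intro prod_ennreal) (simp add: less_imp_le)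
  finally have "ennreal (prob E) \<le> ennreal (\<Prod>l\<in>{1..<n}. 1 / sqrt (1 - 2 * s2 * q l))"
    by (simp add: emeasure_eq_measure)
  moreover have "0 \<le> (\<Prod>l\<in>{1..<n}. 1 / sqrt (1 - 2 * s2 * q l))"
    using pos by (intro prod_nonneg) (simp add: less_imp_le)
  ultimately show ?thesis by simp
qed

lemma prob_noise_Ioo_pos:
  assumes "1 \<le> i" and "l < r"
  shows "0 < prob (Z i -` {l<..<r} \<inter> space M)"
proof -
  have "emeasure M (Z i -` {l<..<r} \<inter> space M)
      = (\<integral>\<^sup>+x. ennreal (normal_density 0 (sqrt s2) x) * indicator {l<..<r} x \<partial>lborel)"
    by (rule distributed_emeasure[OF distributed_normal[OF assms(1)]]) simp
  also have "\<dots> \<noteq> 0"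
  proof
    assume "(\<integral>\<^sup>+x. ennreal (normal_density 0 (sqrt s2) x) * indicator {l<..<r} x \<partial>lborel) = 0"
    then have "AE x in lborel. ennreal (normal_density 0 (sqrt s2) x) * indicator {l<..<r} x = 0"
      by (subst (asm) nn_integral_0_iff_AE) auto
    moreover have "normal_density 0 (sqrt s2) x \<noteq> 0" for x
      using normal_density_pos[of "sqrt s2" 0 x] variance_pos by simp
    ultimately have "AE x in lborel. x \<notin> {l<..<r}"
      by (elim eventually_mono) (auto split: split_indicator)
    then have "emeasure lborel {l<..<r} = 0"
      by (subst (asm) AE_iff_measurable[of "{l<..<r}"]) auto
    with \<open>l < r\<close> show False by simp
  qed
  finally show ?thesis by (simp add: emeasure_eq_measure zero_less_measure_iff)
qed

lemma prob_noise_box_pos: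
  assumes "1 \<le> n" and "\<And>i. i \<in> {1..n} \<Longrightarrow> l i < r i"
  shows "0 < prob (\<Inter>i\<in>{1..n}. Z i -` {l i<..<r i} \<inter> space M)"
proof -
  have "prob (\<Inter>i\<in>{1..n}. Z i -` {l i<..<r i} \<inter> space M)
      = (\<Prod>i\<in>{1..n}. prob (Z i -` {l i<..<r i} \<inter> space M))"
    using assms(1) by (intro indep_varsD[OF indep]) auto
  also have "\<dots> > 0" using assms(2) by (intro prod_pos prob_noise_Ioo_pos) auto
  finally show ?thesis .
qed

lemma prob_pos_if_ml_excess_pos:
  assumes "c\<^sup>2 = 1" and "0 \<le> a" and "0 \<le> \<eta>" and "2 \<le> n" and "E \<in> sets M"
    and "\<And>\<omega>. \<omega> \<in> space M \<Longrightarrow> 0 < ml_excess a c \<eta> n (\<lambda>j. Z j \<omega>) \<Longrightarrow> \<omega> \<in> E"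
  shows "0 < prob E"
proof -
  define L where "L j = (a + \<eta>) * ar_box_bound a \<eta> (j - 1)" for j
  define l where "l j = (if c ^ j = 1 then L j else - (L j + 1))" for j
  define B where "B = (\<Inter>j\<in>{1..n}. Z j -` {l j<..<l j + 1} \<inter> space M)"
  have sign: "c ^ j = 1 \<or> c ^ j = -1" for j
  proof -
    have "c = 1 \<or> c = -1" using \<open>c\<^sup>2 = 1\<close> by (simp add: power2_eq_1_iff)
    then show ?thesis by (cases "even j") auto
  qed
  have "0 < prob B"
    unfolding B_def using \<open>2 \<le> n\<close> by (intro prob_noise_box_pos) auto
  moreover have "B \<subseteq> E"
  proof
    fix \<omega> assume "\<omega> \<in> B"
    then have "\<omega> \<in> space M" using \<open>2 \<le> n\<close> by (auto simp: B_def)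
    have "(\<lambda>j. Z j \<omega>) \<in> ar_box a \<eta> c n"
      unfolding ar_box_def L_def[symmetric]
    proof (intro CollectI ballI)
      fix j assume "j \<in> {1..n}"
      then have "l j < Z j \<omega>" "Z j \<omega> < l j + 1" using \<open>\<omega> \<in> B\<close> by (auto simp: B_def)
      then show "c ^ j * Z j \<omega> \<in> {L j<..<L j + 1}"
        using sign[of j] by (auto simp: l_def)
    qed
    then have "0 < ml_excess a c \<eta> n (\<lambda>j. Z j \<omega>)"
      using ml_excess_pos_on_ar_box assms(1-4) by blast
    with assms(6) \<open>\<omega> \<in> space M\<close> show "\<omega> \<in> E" by blast
  qed
  ultimately show ?thesis
    using finite_measure_mono[OF _ \<open>E \<in> sets M\<close>] by (meson less_le_trans)
qed

lemma ml_tail_exponent_bound: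
  assumes "c\<^sup>2 = 1" and "0 \<le> a" and "0 \<le> \<eta>" and "2 \<le> n" and "0 \<le> s"
    and "q 0 = 0" and "\<And>j. q (Suc j) = riccati_step a s2 \<eta> c s (q j)"
    and q_less: "\<And>l. l \<in> {1..<n} \<Longrightarrow> q l < 1 / (2 * s2)"
  shows "1 / (2 * real n) * (\<Sum>l=1..n-1. ln (1 - 2 * s2 * q l))
    \<le> - (1 / real n) * ln (prob {\<omega> \<in> space M. \<eta> < c * (a_ML (\<lambda>i. ar_proc a Z i \<omega>) n - a)})"
proof -
  define E where "E = {\<omega> \<in> space M. \<eta> < c * (a_ML (\<lambda>i. ar_proc a Z i \<omega>) n - a)}"
  have "E \<in> sets M" unfolding E_def a_ML_def by measurable
  define D where "D \<omega> = (\<Sum>i=1..n-1. (ar_seq a (\<lambda>j. Z j \<omega>) i)\<^sup>2)" for \<omega>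
  have excess: "ml_excess a c \<eta> n (\<lambda>j. Z j \<omega>)
      = D \<omega> * (c * (a_ML (\<lambda>i. ar_proc a Z i \<omega>) n - a) - \<eta>)" for \<omega>
    by (simp add: D_def ml_excess_eq ar_proc_eq_ar_seq)
  have D_nonneg: "0 \<le> D \<omega>" for \<omega>
    by (simp add: D_def sum_nonneg)
  then have "prob E \<le> (\<Prod>l\<in>{1..<n}. 1 / sqrt (1 - 2 * s2 * q l))"
    by (intro prob_le_prod_riccati[OF assms(1,5,6,7) q_less \<open>E \<in> sets M\<close>])
      (auto simp: E_def excess intro!: mult_nonneg_nonneg)
  moreover have "0 < prob E"
    by (intro prob_pos_if_ml_excess_pos[OF assms(1-4) \<open>E \<in> sets M\<close>])
      (auto simp: E_def excess zero_less_mult_iff leD[OF D_nonneg])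
  moreover have pos: "0 < 1 - 2 * s2 * q l" if "l \<in> {1..<n}" for l
    using q_less[OF that] variance_pos by (simp add: field_simps)
  ultimately have "ln (prob E) \<le> ln (\<Prod>l\<in>{1..<n}. 1 / sqrt (1 - 2 * s2 * q l))"
    by simp
  also have "\<dots> = - (\<Sum>l\<in>{1..<n}. ln (1 - 2 * s2 * q l)) / 2"
    by (rule ln_prod_inverse_sqrt[OF finite_atLeastLessThan pos])
  also have "{1..<n} = {1..n-1}" using \<open>2 \<le> n\<close> by auto
  finally have "(\<Sum>l=1..n-1. ln (1 - 2 * s2 * q l)) / 2 \<le> - ln (prob E)"
    by simp
  then have "1 / real n * ((\<Sum>l=1..n-1. ln (1 - 2 * s2 * q l)) / 2) \<le> 1 / real n * - ln (prob E)"
    by (rule mult_left_mono) simp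
  then show ?thesis by (simp add: E_def)
qed

end

theorem theorem1:
  fixes M :: "'a measure" and Z :: "nat \<Rightarrow> 'a \<Rightarrow> real"
    and s2 a \<eta> :: real and n :: nat
  assumes "prob_space M"
    and "s2 > 0" and "a > 1"
    and "prob_space.indep_vars M (\<lambda>_. borel) Z {1..}"
    and "\<And>i. i \<ge> 1 \<Longrightarrow> distributed M lborel (Z i) (normal_density 0 (sqrt s2))"
    and "\<eta> > 0" and "n \<ge> 2"
  shows "ereal (P_plus M Z n a \<eta>) \<ge>
           (SUP s\<in>S_plus a s2 \<eta> n.
              ereal (1 / (2 * real n) * (\<Sum>l=1..n-1. ln (1 - 2 * s2 * alpha_seq a s2 \<eta> s l))))
       \<and> ereal (P_minus M Z n a \<eta>) \<ge>
           (SUP s\<in>S_minus a s2 \<eta> n.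
              ereal (1 / (2 * real n) * (\<Sum>l=1..n-1. ln (1 - 2 * s2 * beta_seq a s2 \<eta> s l))))"
proof -
  interpret gaussian_noise M Z s2
    using assms(1-5) by (simp add: gaussian_noise_def gaussian_noise_axioms_def)
  have alpha: "alpha_seq a s2 \<eta> s (Suc j) = riccati_step a s2 \<eta> 1 s (alpha_seq a s2 \<eta> s j)" for s j
    by (cases j) (simp_all add: riccati_step_def)
  have beta: "beta_seq a s2 \<eta> s (Suc j) = riccati_step a s2 \<eta> (-1) s (beta_seq a s2 \<eta> s j)" for s j
    by (cases j) (simp_all add: riccati_step_def)
  have "ereal (1 / (2 * real n) * (\<Sum>l=1..n-1. ln (1 - 2 * s2 * alpha_seq a s2 \<eta> s l)))
      \<le> ereal (P_plus M Z n a \<eta>)" if "s \<in> S_plus a s2 \<eta> n" for s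
    using ml_tail_exponent_bound[where c=1 and q="alpha_seq a s2 \<eta> s", OF _ _ _ _ _ _ alpha] that assms
    by (simp add: S_plus_def P_plus_def)
  moreover have "ereal (1 / (2 * real n) * (\<Sum>l=1..n-1. ln (1 - 2 * s2 * beta_seq a s2 \<eta> s l)))
      \<le> ereal (P_minus M Z n a \<eta>)" if "s \<in> S_minus a s2 \<eta> n" for s
    using ml_tail_exponent_bound[where c="-1" and q="beta_seq a s2 \<eta> s", OF _ _ _ _ _ _ beta] that assms
    by (simp add: S_minus_def P_minus_def algebra_simps)
  ultimately show ?thesis
    by (intro conjI SUP_least) auto
qed

end
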